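(* As $\lambda\to0$ with $\lambda\in\overline{\mathbb C^+}\setminus\{0\}$, $\Gamma(\lambda)^{-1}$ stays bounded if and only if $S\tilde DS$ is non-singular on $S\mathbb C^N$. In this case $$\Gamma(\lambda)^{-1}=[S\tilde DS]^{-1}+O(|g(\lambda)|^{-1})\qquad(\lambda\to0),$$ where $[S\tilde DS]^{-1}$ is the inverse on $S\mathbb C^N$ extended by $0$ on $P\mathbb C^N$, and there exist $\lambda_0>0$ and constants $C_\ell$ such that for all entries, all $\ell=0,1,2,\dots$ and $0<\lambda<\lambda_0$: $\big|\partial_\lambda^\ell[\Gamma(\lambda)^{-1}]_{jk}\big|\le C_\ell\lambda^{-\ell}$.
   Context: Fix $N\ge1$, distinct points $y_1,\dots,y_N\in\mathbb R^2$, $\alpha\in\mathbb R^N$. For $\lambda\in\overline{\mathbb C^+}\setminus\{0\}$: $\mathcal G_\lambda(x)=\frac i4H_0^{(1)}(\lambda|x|)$, $g(\lambda)=-\frac1{2\pi}\log(\lambda/2)+\frac i4-\frac{\gamma}{2\pi}$ ($\gamma$ Euler's constant, principal logarithm), $\Gamma(\lambda)$ the $N\times N$ matrix with $\Gamma(\lambda)_{jj}=\alpha_j-g(\lambda)$, $\Gamma(\lambda)_{jk}=-\mathcal G_\lambda(y_j-y_k)$ ($j\ne k$). $P$ is the orthogonal projection onto $\mathbb C(1,\dots,1)^t$, $S=I-P$; $\tilde D$ the real symmetric matrix with $\tilde D_{jj}=\alpha_j$, $\tilde D_{jk}=\frac1{2\pi}\log|y_j-y_k|$ ($j\ne k$).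 $O(h(\lambda))$ denotes a matrix whose norm is bounded by $C|h(\lambda)|$ for small $|\lambda|$. *)

theory Defs
  imports "HOL-Analysis.Analysis"
begin

definition besselJ0 :: "complex \<Rightarrow> complex" where
  "besselJ0 z = (\<Sum>m. (-1)^m * (z/2)^(2*m) / (of_nat (fact m))^2)"

definition besselY0 :: "complex \<Rightarrow> complex" where
  "besselY0 z = (2 / of_real pi) * ((Ln (z/2) + euler_mascheroni) * besselJ0 z
      + (\<Sum>m. (-1)^(m+1) * harm m * (z/2)^(2*m) / (of_nat (fact m))^2))"

definition hankel10 :: "complex \<Rightarrow> complex" where
  "hankel10 z = besselJ0 z + \<i> * besselY0 z"

definition greenG :: "complex \<Rightarrow> real^2 \<Rightarrow> complex" where
  "greenG lam x = (\<i>/4) * hankel10 (lam * of_real (norm x))"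

definition gfun :: "complex \<Rightarrow> complex" where
  "gfun lam = - (1/(2 * of_real pi)) * Ln (lam/2) + \<i>/4 - euler_mascheroni/(2 * of_real pi)"

definition GammaM :: "('n::finite \<Rightarrow> real^2) \<Rightarrow> ('n \<Rightarrow> real) \<Rightarrow> complex \<Rightarrow> complex^'n^'n" where
  "GammaM y \<alpha> lam = (\<chi> j k. if j = k then of_real (\<alpha> j) - gfun lam
                               else - greenG lam (y j - y k))"

definition Pm :: "complex^'n::finite^'n" where
  "Pm = (\<chi> j k. 1 / of_nat CARD('n))"

definition Sm :: "complex^'n::finite^'n" where
  "Sm = mat 1 - Pm"

definition Dtilde :: "('n::finite \<Rightarrow> real^2) \<Rightarrow> ('n \<Rightarrow> real) \<Rightarrow> complex^'n^'n" where
  "Dtilde y \<alpha> = (\<chi> j k. if j = k then of_real (\<alpha> j)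
                          else of_real (ln (dist (y j) (y k)) / (2*pi)))"

definition nonsing_on_S :: "complex^'n::finite^'n \<Rightarrow> bool" where
  "nonsing_on_S A \<longleftrightarrow> (\<forall>v. Sm *v v = v \<longrightarrow> A *v v = 0 \<longrightarrow> v = 0)"

text \<open>[A]^{-1}: inverse of A on S C^N, extended by 0 on P C^N (A = S D S).\<close>
definition inv_on_S :: "complex^'n::finite^'n \<Rightarrow> complex^'n^'n" where
  "inv_on_S A = (THE M. Sm ** M = M \<and> M ** Pm = 0 \<and> M ** A = Sm)"

definition rderiv :: "(real \<Rightarrow> complex) \<Rightarrow> real \<Rightarrow> complex" where
  "rderiv f t = vector_derivative f (at t)"

definition cuhp0 :: "complex set" where
  "cuhp0 = {z. Im z \<ge> 0 \<and> z \<noteq> 0}"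

end

theory Submission
  imports Defs "HOL-Complex_Analysis.Complex_Analysis" "HOL-Real_Asymp.Real_Asymp"
begin

text \<open>
  Near \<open>\<lambda> = 0\<close> the matrix has the form \<open>\<Gamma>(\<lambda>) = D + E(\<lambda>) - N g(\<lambda>) P\<close> with
  \<open>D\<close> the matrix \<open>Dtilde\<close>, where the remainder \<open>E(\<lambda>)\<close> collects the \<open>O(\<lambda>\<^sup>2 log \<lambda>)\<close> terms of the Bessel
  series of the Green's function; thus \<open>c = N g(\<lambda>) \<rightarrow> \<infinity>\<close> while \<open>|E(\<lambda>)| = o(1/|g(\<lambda>)|)\<close>.
  If \<open>S D S\<close> is invertible on \<open>S \<complex>\<^sup>N\<close> with inverse \<open>Q\<close>, then \<open>Q - (P - P D Q)/c\<close> inverts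
  \<open>D + E - c P\<close> up to an error \<open>O(1/|c|)\<close>, and a Neumann series gives
  \<open>\<Gamma>(\<lambda>)\<^sup>-\<^sup>1 = Q + O(1/|g(\<lambda>)|)\<close>. Conversely, a kernel vector \<open>v\<close> of \<open>S D S\<close> gives the
  almost-kernel vector \<open>v + P D v / c\<close> of \<open>\<Gamma>(\<lambda>)\<close>, so \<open>\<Gamma>(\<lambda>)\<^sup>-\<^sup>1\<close> is unbounded. The
  derivative bounds follow from Cauchy's inequality on the discs of radius \<open>\<lambda>/2\<close> around
  \<open>\<lambda> > 0\<close>, on which \<open>\<Gamma>(\<lambda>)\<^sup>-\<^sup>1\<close> is holomorphic and bounded.
\<close>

lemma matrix_add_rdistrib: "((A::'a::ring_1^'n::finite^'m::finite) + B) ** C = A ** C + B ** C"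
  by (vector matrix_matrix_mult_def sum.distrib[symmetric] algebra_simps)

lemma matrix_diff_rdistrib: "((A::'a::ring_1^'n::finite^'m::finite) - B) ** C = A ** C - B ** C"
  by (vector matrix_matrix_mult_def sum_subtractf[symmetric] algebra_simps)

lemma matrix_diff_ldistrib: "(A::'a::ring_1^'n::finite^'m::finite) ** (B - C) = A ** B - A ** C"
  by (vector matrix_matrix_mult_def sum_subtractf[symmetric] algebra_simps)

definition mat_scale :: "complex \<Rightarrow> complex^'n::finite^'m::finite \<Rightarrow> complex^'n^'m" where
  "mat_scale c A = map_matrix ((*) c) A"

lemma mat_scale_mult_left: "mat_scale c A ** B = mat_scale c (A ** B)"
  by (simp add: mat_scale_def vec_eq_iff matrix_matrix_mult_def sum_distrib_left mult.assoc)

lemma mat_scale_mult_right: "A ** mat_scale c B = mat_scale c (A ** B)"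
  by (simp add: mat_scale_def vec_eq_iff matrix_matrix_mult_def sum_distrib_left mult_ac)

lemma mat_scale_mult_vec: "mat_scale c A *v x = c *s (A *v x)"
  by (simp add: mat_scale_def vec_eq_iff matrix_vector_mult_def sum_distrib_left mult.assoc)

lemma mat_scale_scale: "mat_scale a (mat_scale b A) = mat_scale (a * b) A"
  by (simp add: mat_scale_def vec_eq_iff mult.assoc)

lemma mat_scale_diff: "mat_scale c (A - B) = mat_scale c A - mat_scale c B"
  by (simp add: mat_scale_def vec_eq_iff algebra_simps)

lemma mat_scale_0_right [simp]: "mat_scale c 0 = 0"
  by (simp add: mat_scale_def vec_eq_iff)

lemma mat_scale_1 [simp]: "mat_scale 1 A = A"
  by (simp add: mat_scale_def vec_eq_iff)

lemma matrix_inv_inverse: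
  fixes A :: "complex^'n::finite^'n"
  assumes "invertible A"
  shows "A ** matrix_inv A = mat 1" and "matrix_inv A ** A = mat 1"
proof -
  obtain X where "A ** X = mat 1 \<and> X ** A = mat 1"
    using assms unfolding invertible_def by blast
  then have "A ** matrix_inv A = mat 1 \<and> matrix_inv A ** A = mat 1"
    unfolding matrix_inv_def by (rule someI[where x=X])
  then show "A ** matrix_inv A = mat 1" and "matrix_inv A ** A = mat 1" by auto
qed

lemma matrix_inv_unique:
  fixes A X :: "complex^'n::finite^'n"
  assumes AX: "A ** X = mat 1"
  shows "invertible A" and "matrix_inv A = X"
proof -
  have XA: "X ** A = mat 1"
    using AX matrix_left_right_inverse by blast
  then show inv: "invertible A"
    unfolding invertible_def using AX by blast
  have "matrix_inv A = matrix_inv A ** (A ** X)"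
    by (simp add: AX)
  also have "\<dots> = X"
    by (simp add: matrix_mul_assoc matrix_inv_inverse[OF inv])
  finally show "matrix_inv A = X" .
qed

lemma Pm_idem: "Pm ** Pm = (Pm :: complex^'n::finite^'n)"
  by (simp add: vec_eq_iff matrix_matrix_mult_def Pm_def)

lemma Sm_Pm: "Sm ** Pm = (0 :: complex^'n::finite^'n)"
  by (simp add: Sm_def matrix_diff_rdistrib Pm_idem)

lemma Pm_Sm: "Pm ** Sm = (0 :: complex^'n::finite^'n)"
  by (simp add: Sm_def matrix_diff_ldistrib Pm_idem)

lemma Sm_idem: "Sm ** Sm = (Sm :: complex^'n::finite^'n)"
  by (simp add: Sm_def matrix_diff_ldistrib matrix_diff_rdistrib Pm_idem)

lemma Sm_plus_Pm: "Sm + Pm = (mat 1 :: complex^'n::finite^'n)"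
  by (simp add: Sm_def)

lemma Pm_mult_eq_0: "Sm ** A = A \<Longrightarrow> Pm ** (A::complex^'n::finite^'n) = 0"
  by (metis Pm_Sm matrix_mul_assoc times0_left)

lemma mult_Pm_eq_0: "A ** Sm = A \<Longrightarrow> (A::complex^'n::finite^'n) ** Pm = 0"
  by (metis Sm_Pm matrix_mul_assoc times0_right)

lemma invertible_plus_Pm:
  fixes A :: "complex^'n::finite^'n"
  assumes SA: "Sm ** A = A" and ns: "nonsing_on_S A"
  shows "invertible (A + Pm)"
proof -
  have "inj ((*v) (A + Pm))"
  proof (rule injI)
    fix x z assume "(A + Pm) *v x = (A + Pm) *v z"
    then have h: "(A + Pm) *v (x - z) = 0"
      by (simp add: matrix_vector_mult_diff_distrib)
    have "Sm *v ((A + Pm) *v (x - z)) = A *v (x - z)"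
      by (simp add: matrix_vector_mul_assoc matrix_add_ldistrib SA Sm_Pm)
    moreover have "Pm *v ((A + Pm) *v (x - z)) = Pm *v (x - z)"
      by (simp add: matrix_vector_mul_assoc matrix_add_ldistrib Pm_mult_eq_0[OF SA] Pm_idem)
    ultimately have "A *v (x - z) = 0" and "Sm *v (x - z) = x - z"
      using h by (simp_all add: Sm_def matrix_vector_mult_diff_rdistrib)
    then show "x = z"
      using ns unfolding nonsing_on_S_def by auto
  qed
  then show ?thesis
    using matrix_left_invertible_injective invertible_left_inverse by blast
qed

text \<open>With \<open>B = A + P\<close>, the inverse of \<open>A\<close> on \<open>S \<complex>\<^sup>N\<close> is \<open>S B\<^sup>-\<^sup>1\<close>.\<close>

lemma inv_on_S:
  fixes A :: "complex^'n::finite^'n"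
  assumes SA: "Sm ** A = A" and AS: "A ** Sm = A" and ns: "nonsing_on_S A"
  shows "Sm ** inv_on_S A = inv_on_S A" and "Pm ** inv_on_S A = 0"
    and "A ** inv_on_S A = Sm"
proof -
  define B where "B = A + Pm"
  define B' where "B' = matrix_inv B"
  have inv: "invertible B"
    unfolding B_def by (rule invertible_plus_Pm[OF SA ns])
  have B'B: "B' ** B = mat 1" and BB': "B ** B' = mat 1"
    unfolding B'_def using matrix_inv_inverse[OF inv] by auto
  have BP: "B ** Pm = Pm"
    by (simp add: B_def matrix_add_rdistrib mult_Pm_eq_0[OF AS] Pm_idem)
  have PB: "Pm ** B = Pm"
    by (simp add: B_def matrix_add_ldistrib Pm_mult_eq_0[OF SA] Pm_idem)
  have B'P: "B' ** Pm = Pm"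
    using arg_cong[OF BP, of "\<lambda>X. B' ** X"] by (simp add: matrix_mul_assoc B'B)
  have PB': "Pm ** B' = Pm"
    using arg_cong[OF PB, of "\<lambda>X. X ** B'"] by (simp add: matrix_mul_assoc[symmetric] BB')
  define Q where "Q = Sm ** B'"
  have SQ: "Sm ** Q = Q" by (simp add: Q_def matrix_mul_assoc Sm_idem)
  have QP: "Q ** Pm = 0" by (simp add: Q_def matrix_mul_assoc[symmetric] B'P Sm_Pm)
  have PQ: "Pm ** Q = 0" by (simp add: Q_def matrix_mul_assoc Pm_Sm)
  have QB: "Q ** B = Sm" by (simp add: Q_def matrix_mul_assoc[symmetric] B'B)
  then have QA: "Q ** A = Sm" using QP by (simp add: B_def matrix_add_ldistrib)
  have "B' = Q + Pm"
    using matrix_add_rdistrib[of Sm Pm B'] by (simp add: Sm_plus_Pm Q_def PB')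
  then have "mat 1 = A ** Q + Pm"
    using BB' by (simp add: B_def matrix_add_ldistrib matrix_add_rdistrib
        mult_Pm_eq_0[OF AS] PQ Pm_idem)
  then have AQ: "A ** Q = Sm" by (simp add: Sm_def)
  have "inv_on_S A = Q"
    unfolding inv_on_S_def
  proof (rule the_equality)
    fix M assume "Sm ** M = M \<and> M ** Pm = 0 \<and> M ** A = Sm"
    then have "M ** B = Sm" by (simp add: B_def matrix_add_ldistrib)
    then have "M ** (B ** B') = Sm ** B'" by (simp add: matrix_mul_assoc)
    then show "M = Q" by (simp add: BB' Q_def)
  qed (use SQ QP QA in auto)
  then show "Sm ** inv_on_S A = inv_on_S A" and "Pm ** inv_on_S A = 0" and "A ** inv_on_S A = Sm"
    using SQ PQ AQ by simp_all
qed

text \<open>The entrywise \<open>\<ell>\<^sup>1\<close> norm is used because it is plainly submultiplicative;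
  it is equivalent to the Euclidean \<open>norm\<close> of the statement (\<open>norm_le_mat_norm1\<close>,
  \<open>mat_norm1_le_norm\<close>).\<close>

definition mat_norm1 :: "complex^'n::finite^'m::finite \<Rightarrow> real" where
  "mat_norm1 A = (\<Sum>i\<in>UNIV. \<Sum>j\<in>UNIV. cmod (A$i$j))"

definition vec_norm1 :: "complex^'n::finite \<Rightarrow> real" where
  "vec_norm1 x = (\<Sum>i\<in>UNIV. cmod (x$i))"

lemma mat_norm1_nonneg: "0 \<le> mat_norm1 A"
  by (simp add: mat_norm1_def sum_nonneg)

lemma vec_norm1_nonneg: "0 \<le> vec_norm1 x"
  by (simp add: vec_norm1_def sum_nonneg)

lemma mat_norm1_add: "mat_norm1 (A + B) \<le> mat_norm1 A + mat_norm1 B"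
  unfolding mat_norm1_def sum.distrib[symmetric] by (intro sum_mono) (simp add: norm_triangle_ineq)

lemma mat_norm1_diff: "mat_norm1 (A - B) \<le> mat_norm1 A + mat_norm1 B"
  unfolding mat_norm1_def sum.distrib[symmetric] by (intro sum_mono) (simp add: norm_triangle_ineq4)

lemma mat_norm1_uminus [simp]: "mat_norm1 (- A) = mat_norm1 A"
  by (simp add: mat_norm1_def)

lemma mat_norm1_scale: "mat_norm1 (mat_scale c A) = cmod c * mat_norm1 A"
  by (simp add: mat_norm1_def mat_scale_def norm_mult sum_distrib_left)

lemma vec_norm1_add: "vec_norm1 (x + y) \<le> vec_norm1 x + vec_norm1 y"
  unfolding vec_norm1_def sum.distrib[symmetric] by (intro sum_mono) (simp add: norm_triangle_ineq)

lemma vec_norm1_diff: "vec_norm1 (x - y) \<le> vec_norm1 x + vec_norm1 y"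
  unfolding vec_norm1_def sum.distrib[symmetric] by (intro sum_mono) (simp add: norm_triangle_ineq4)

lemma vec_norm1_uminus [simp]: "vec_norm1 (- x) = vec_norm1 x"
  by (simp add: vec_norm1_def)

lemma vec_norm1_scale: "vec_norm1 (c *s x) = cmod c * vec_norm1 x"
  by (simp add: vec_norm1_def norm_mult sum_distrib_left)

lemma vec_norm1_eq_0_iff: "vec_norm1 x = 0 \<longleftrightarrow> x = 0"
  by (simp add: vec_norm1_def vec_eq_iff sum_nonneg_eq_0_iff)

lemma norm_entry_le_mat_norm1: "cmod (A$i$j) \<le> mat_norm1 A"
proof -
  have "cmod (A$i$j) \<le> (\<Sum>j\<in>UNIV. cmod (A$i$j))"
    by (rule member_le_sum) auto
  also have "\<dots> \<le> mat_norm1 A"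
    unfolding mat_norm1_def by (rule member_le_sum) (auto intro: sum_nonneg)
  finally show ?thesis .
qed

lemma mat_norm1_mult:
  fixes A :: "complex^'n::finite^'m::finite" and B :: "complex^'p::finite^'n"
  shows "mat_norm1 (A ** B) \<le> mat_norm1 A * mat_norm1 B"
proof -
  have "mat_norm1 (A ** B) \<le> (\<Sum>i\<in>UNIV. \<Sum>k\<in>UNIV. \<Sum>j\<in>UNIV. cmod (A$i$j) * cmod (B$j$k))"
    unfolding mat_norm1_def matrix_matrix_mult_def
    by (intro sum_mono) (simp add: norm_mult order_trans[OF norm_sum])
  also have "\<dots> = (\<Sum>i\<in>UNIV. \<Sum>j\<in>UNIV. cmod (A$i$j) * (\<Sum>k\<in>UNIV. cmod (B$j$k)))"
    by (rule sum.cong[OF refl], subst sum.swap, simp add: sum_distrib_left)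
  also have "\<dots> \<le> (\<Sum>i\<in>UNIV. \<Sum>j\<in>UNIV. cmod (A$i$j) * mat_norm1 B)"
    unfolding mat_norm1_def by (intro sum_mono mult_left_mono member_le_sum) (auto intro: sum_nonneg)
  also have "\<dots> = mat_norm1 A * mat_norm1 B"
    by (simp add: mat_norm1_def sum_distrib_right)
  finally show ?thesis .
qed

lemma vec_norm1_mult:
  fixes A :: "complex^'n::finite^'m::finite"
  shows "vec_norm1 (A *v x) \<le> mat_norm1 A * vec_norm1 x"
proof -
  have "vec_norm1 (A *v x) \<le> (\<Sum>i\<in>UNIV. \<Sum>j\<in>UNIV. cmod (A$i$j) * cmod (x$j))"
    unfolding vec_norm1_def matrix_vector_mult_def
    by (intro sum_mono) (simp add: norm_mult order_trans[OF norm_sum])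
  also have "\<dots> \<le> (\<Sum>i\<in>UNIV. \<Sum>j\<in>UNIV. cmod (A$i$j) * vec_norm1 x)"
    unfolding vec_norm1_def by (intro sum_mono mult_left_mono member_le_sum) auto
  also have "\<dots> = mat_norm1 A * vec_norm1 x"
    by (simp add: mat_norm1_def sum_distrib_right)
  finally show ?thesis .
qed

lemma mat_norm1_mat_1: "mat_norm1 (mat 1 :: complex^'n::finite^'n) = CARD('n)"
  by (simp add: mat_norm1_def mat_def if_distrib[of cmod] cong: if_cong)

lemma mat_norm1_Pm: "mat_norm1 (Pm :: complex^'n::finite^'n) = CARD('n)"
  by (simp add: mat_norm1_def Pm_def norm_divide)

lemma norm_le_mat_norm1: "norm A \<le> mat_norm1 A"
proof -
  have "norm A \<le> (\<Sum>i\<in>UNIV. norm (A$i))"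
    unfolding norm_vec_def[of A] by (rule L2_set_le_sum) auto
  also have "\<dots> \<le> (\<Sum>i\<in>UNIV. \<Sum>j\<in>UNIV. norm (A$i$j))"
    unfolding norm_vec_def by (intro sum_mono L2_set_le_sum) auto
  finally show ?thesis by (simp add: mat_norm1_def)
qed

lemma mat_norm1_le_norm:
  "mat_norm1 (A::complex^'n::finite^'m::finite) \<le> real CARD('m) * real CARD('n) * norm A"
proof -
  have "mat_norm1 A \<le> (\<Sum>i\<in>(UNIV::'m set). \<Sum>j\<in>(UNIV::'n set). norm A)"
    unfolding mat_norm1_def by (intro sum_mono) (rule order_trans[OF Finite_Cartesian_Product.norm_nth_le Finite_Cartesian_Product.norm_nth_le])
  then show ?thesis by simp
qed

section \<open>Perturbation of \<open>D - c P\<close> for large \<open>c\<close>\<close>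

lemma invertible_mat_1_plus:
  fixes R :: "complex^'n::finite^'n"
  assumes R: "mat_norm1 R \<le> 1/2"
  shows "invertible (mat 1 + R)" and "mat_norm1 (matrix_inv (mat 1 + R)) \<le> 2 * CARD('n)"
proof -
  have "inj ((*v) (mat 1 + R))"
  proof (rule injI)
    fix x z assume "(mat 1 + R) *v x = (mat 1 + R) *v z"
    then have "(mat 1 + R) *v (x - z) = 0"
      by (simp add: matrix_vector_mult_diff_distrib)
    then have "x - z = - (R *v (x - z))"
      by (simp add: matrix_vector_mult_add_rdistrib eq_neg_iff_add_eq_0)
    then have "vec_norm1 (x - z) \<le> mat_norm1 R * vec_norm1 (x - z)"
      using vec_norm1_mult[of R "x - z"] by (metis vec_norm1_uminus)
    also have "\<dots> \<le> 1/2 * vec_norm1 (x - z)"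
      by (intro mult_right_mono R vec_norm1_nonneg)
    finally show "x = z"
      using vec_norm1_nonneg[of "x - z"] vec_norm1_eq_0_iff[of "x - z"] by simp
  qed
  then obtain T where "T ** (mat 1 + R) = mat 1"
    using matrix_left_invertible_injective by blast
  then have T: "(mat 1 + R) ** T = mat 1"
    using matrix_left_right_inverse by blast
  show "invertible (mat 1 + R)"
    by (rule matrix_inv_unique(1)[OF T])
  have "T = mat 1 - R ** T"
    using T by (simp add: matrix_add_rdistrib algebra_simps)
  then have "mat_norm1 T \<le> mat_norm1 (mat 1 :: complex^'n^'n) + mat_norm1 (R ** T)"
    using mat_norm1_diff[of "mat 1" "R ** T"] by simp
  also have "\<dots> \<le> CARD('n) + mat_norm1 R * mat_norm1 T"
    by (simp add: mat_norm1_mat_1 mat_norm1_mult)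
  also have "\<dots> \<le> CARD('n) + 1/2 * mat_norm1 T"
    by (intro add_left_mono mult_right_mono R mat_norm1_nonneg)
  finally show "mat_norm1 (matrix_inv (mat 1 + R)) \<le> 2 * CARD('n)"
    using matrix_inv_unique(2)[OF T] by simp
qed

lemma approximate_inverse:
  fixes G Z R :: "complex^'n::finite^'n"
  assumes GZ: "G ** Z = mat 1 + R" and R: "mat_norm1 R \<le> 1/2"
  shows "invertible G"
    and "mat_norm1 (matrix_inv G - Z) \<le> 2 * CARD('n) * mat_norm1 Z * mat_norm1 R"
proof -
  define T where "T = matrix_inv (mat 1 + R)"
  have T: "(mat 1 + R) ** T = mat 1"
    unfolding T_def by (rule matrix_inv_inverse(1)[OF invertible_mat_1_plus(1)[OF R]])
  have GZT: "G ** (Z ** T) = mat 1"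
    by (simp add: matrix_mul_assoc GZ T)
  show "invertible G"
    by (rule matrix_inv_unique(1)[OF GZT])
  have "matrix_inv G - Z = - (Z ** R ** T)"
    using arg_cong[OF T, of "\<lambda>X. Z ** X"]
    by (simp add: matrix_inv_unique(2)[OF GZT] matrix_add_ldistrib matrix_add_rdistrib
        matrix_mul_assoc algebra_simps)
  then have "mat_norm1 (matrix_inv G - Z) \<le> mat_norm1 (Z ** R) * mat_norm1 T"
    by (simp add: mat_norm1_mult)
  also have "\<dots> \<le> mat_norm1 Z * mat_norm1 R * mat_norm1 T"
    by (intro mult_right_mono mat_norm1_mult mat_norm1_nonneg)
  also have "\<dots> \<le> mat_norm1 Z * mat_norm1 R * (2 * CARD('n))"
    unfolding T_def by (intro mult_left_mono invertible_mat_1_plus(2)[OF R])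
      (simp add: mat_norm1_nonneg)
  finally show "mat_norm1 (matrix_inv G - Z) \<le> 2 * CARD('n) * mat_norm1 Z * mat_norm1 R"
    by (simp add: mult_ac)
qed

text \<open>\<open>Q\<close> inverts the \<open>S\<close>-block of \<open>D\<close>; the correction \<open>- W / c\<close> supplies the
  \<open>P\<close>-block, since \<open>(- c P) (- W / c) = P W = W\<close>.\<close>

lemma approximate_inverse_identity:
  fixes D E Q :: "complex^'n::finite^'n"
  assumes c: "c \<noteq> 0" and SQ: "Sm ** Q = Q" and PQ: "Pm ** Q = 0"
    and AQ: "(Sm ** D ** Sm) ** Q = Sm"
  defines "W \<equiv> Pm - Pm ** D ** Q"
  shows "(D + E - mat_scale c Pm) ** (Q - mat_scale (1/c) W)
           = mat 1 + (E ** Q - mat_scale (1/c) ((D + E) ** W))"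
proof -
  have "D ** Q = (Sm + Pm) ** D ** Q"
    by (simp add: Sm_plus_Pm)
  also have "\<dots> = Sm ** D ** Sm ** Q + Pm ** D ** Q"
    by (simp add: matrix_add_rdistrib SQ flip: matrix_mul_assoc)
  finally have DQ: "D ** Q = Sm + Pm ** D ** Q"
    using AQ by simp
  have PW: "Pm ** W = W"
    by (simp add: W_def matrix_diff_ldistrib matrix_mul_assoc Pm_idem)
  have "(D + E - mat_scale c Pm) ** (Q - mat_scale (1/c) W)
      = D ** Q + E ** Q - mat_scale (1/c) ((D + E) ** W) + W"
    using c by (simp add: matrix_diff_ldistrib matrix_diff_rdistrib matrix_add_rdistrib
        mat_scale_mult_left mat_scale_mult_right mat_scale_diff mat_scale_scale PQ PW)
  also have "\<dots> = mat 1 + (E ** Q - mat_scale (1/c) ((D + E) ** W))"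
    by (simp add: DQ W_def flip: Sm_plus_Pm)
  finally show ?thesis .
qed

lemma approximate_inverse_remainder_le:
  fixes D E Q W :: "complex^'n::finite^'n"
  assumes ch: "cmod (1/c) \<le> h" and Eh: "mat_norm1 E \<le> h" and h1: "h \<le> 1"
  shows "mat_norm1 (E ** Q - mat_scale (1/c) ((D + E) ** W))
           \<le> h * (mat_norm1 Q + (mat_norm1 D + 1) * mat_norm1 W)"
proof -
  have h0: "0 \<le> h" using ch norm_ge_zero order_trans by blast
  have "mat_norm1 (E ** Q) \<le> h * mat_norm1 Q"
    by (rule order_trans[OF mat_norm1_mult mult_right_mono[OF Eh mat_norm1_nonneg]])
  moreover have "mat_norm1 (D + E) \<le> mat_norm1 D + 1"
    using mat_norm1_add[of D E] Eh h1 by linarith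
  then have "mat_norm1 ((D + E) ** W) \<le> (mat_norm1 D + 1) * mat_norm1 W"
    by (rule order_trans[OF mat_norm1_mult mult_right_mono[OF _ mat_norm1_nonneg]])
  then have "mat_norm1 (mat_scale (1/c) ((D + E) ** W)) \<le> h * ((mat_norm1 D + 1) * mat_norm1 W)"
    unfolding mat_norm1_scale using ch h0 by (intro mult_mono) (auto simp: mat_norm1_nonneg)
  ultimately show ?thesis
    using mat_norm1_diff[of "E ** Q" "mat_scale (1/c) ((D + E) ** W)"] by (simp add: algebra_simps)
qed

lemma perturbed_inverse_expansion:
  fixes D :: "complex^'n::finite^'n"
  assumes ns: "nonsing_on_S (Sm ** D ** Sm)"
  obtains C \<delta> where "0 < \<delta>"
    and "\<And>c E h. c \<noteq> 0 \<Longrightarrow> cmod (1/c) \<le> h \<Longrightarrow> mat_norm1 E \<le> h \<Longrightarrow> h < \<delta> \<Longrightarrow>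
           invertible (D + E - mat_scale c Pm) \<and>
           mat_norm1 (matrix_inv (D + E - mat_scale c Pm) - inv_on_S (Sm ** D ** Sm)) \<le> C * h"
proof -
  define A where "A = Sm ** D ** Sm"
  define Q where "Q = inv_on_S A"
  define W where "W = Pm - Pm ** D ** Q"
  have SA: "Sm ** A = A" by (simp add: A_def matrix_mul_assoc Sm_idem)
  have AS: "A ** Sm = A" by (simp add: A_def Sm_idem flip: matrix_mul_assoc)
  note Q = inv_on_S[OF SA AS ns[folded A_def], folded Q_def]
  define q w where "q = mat_norm1 Q" and "w = mat_norm1 W"
  define a where "a = q + (mat_norm1 D + 1) * w"
  have nonneg: "0 \<le> q" "0 \<le> w" "0 \<le> a"
    by (simp_all add: a_def q_def w_def mat_norm1_nonneg)
  show thesis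
  proof
    show "0 < min 1 (1 / (2 * a + 1))" using nonneg by simp
    fix c h and E :: "complex^'n^'n"
    assume c: "c \<noteq> 0" and ch: "cmod (1/c) \<le> h" and Eh: "mat_norm1 E \<le> h"
      and h\<delta>: "h < min 1 (1 / (2 * a + 1))"
    have h0: "0 \<le> h" using ch norm_ge_zero order_trans by blast
    have "h * (2 * a + 1) < 1"
      using h\<delta> nonneg by (simp add: field_simps)
    then have h1: "h \<le> 1" and ha: "h * a \<le> 1/2"
      using h0 h\<delta> by (auto simp: algebra_simps)
    define Z where "Z = Q - mat_scale (1/c) W"
    define R where "R = E ** Q - mat_scale (1/c) ((D + E) ** W)"
    have GZ: "(D + E - mat_scale c Pm) ** Z = mat 1 + R"
      unfolding Z_def R_def W_def using Q by (intro approximate_inverse_identity c) (simp_all add: A_def)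
    have R: "mat_norm1 R \<le> h * a"
      unfolding R_def a_def q_def w_def by (rule approximate_inverse_remainder_le[OF ch Eh h1])
    note inv = approximate_inverse[OF GZ order_trans[OF R ha]]
    have W: "mat_norm1 (mat_scale (1/c) W) \<le> h * w"
      unfolding mat_norm1_scale w_def using ch by (rule mult_right_mono) (rule mat_norm1_nonneg)
    moreover have "h * w \<le> w"
      using h0 h1 nonneg by (simp add: mult_left_le_one_le)
    ultimately have "mat_norm1 Z \<le> q + w"
      using mat_norm1_diff[of Q "mat_scale (1/c) W"] unfolding Z_def q_def by linarith
    then have "2 * CARD('n) * mat_norm1 Z * mat_norm1 R \<le> 2 * CARD('n) * (q + w) * (h * a)"
      using R nonneg by (intro mult_mono mult_left_mono) (auto simp: mat_norm1_nonneg)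
    moreover have "mat_norm1 (matrix_inv (D + E - mat_scale c Pm) - Q)
        \<le> mat_norm1 (matrix_inv (D + E - mat_scale c Pm) - Z) + mat_norm1 (mat_scale (1/c) W)"
      using mat_norm1_add[of "matrix_inv (D + E - mat_scale c Pm) - Z" "- mat_scale (1/c) W"]
      by (simp add: Z_def)
    ultimately have "mat_norm1 (matrix_inv (D + E - mat_scale c Pm) - Q)
        \<le> (2 * CARD('n) * (q + w) * a + w) * h"
      using inv(2) W by (simp add: algebra_simps)
    then show "invertible (D + E - mat_scale c Pm) \<and>
       mat_norm1 (matrix_inv (D + E - mat_scale c Pm) - inv_on_S (Sm ** D ** Sm))
         \<le> (2 * CARD('n) * (q + w) * a + w) * h"
      using inv(1) by (simp add: Q_def A_def)
  qed
qed

text \<open>A kernel vector \<open>v\<close> of \<open>S D S\<close> satisfies \<open>D v = P D v\<close>, so the correction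
  \<open>v + P D v / c\<close> removes the large term \<open>c P\<close> from \<open>(D + E - c P) v\<close>.\<close>

lemma kernel_vector_identity:
  fixes D E :: "complex^'n::finite^'n"
  assumes c: "c \<noteq> 0" and Sv: "Sm *v v = v" and Av: "(Sm ** D ** Sm) *v v = 0"
  defines "w \<equiv> Pm *v (D *v v)"
  shows "(D + E - mat_scale c Pm) *v (v + (1/c) *s w) = E *v v + (1/c) *s ((D + E) *v w)"
proof -
  have Pv: "Pm *v v = 0"
    by (metis Sv Pm_Sm matrix_vector_mul_assoc matrix_vector_mult_0)
  have "Sm *v (D *v v) = (Sm ** D ** Sm) *v v"
    by (metis Sv matrix_vector_mul_assoc)
  then have "D *v v = w"
    using Av matrix_vector_mult_add_rdistrib[of Sm Pm "D *v v"] by (simp add: Sm_plus_Pm w_def)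
  moreover have "Pm *v w = w"
    by (simp add: w_def matrix_vector_mul_assoc matrix_mul_assoc Pm_idem)
  ultimately show ?thesis
    using c by (simp add: matrix_vector_mult_add_rdistrib matrix_vector_mult_diff_rdistrib
        matrix_vector_right_distrib mat_scale_mult_vec Pv vector_scalar_commute vector_smult_assoc
        algebra_simps)
qed

lemma kernel_vector_estimate:
  fixes D E :: "complex^'n::finite^'n"
  assumes c: "c \<noteq> 0" and ch: "cmod (1/c) \<le> h" and Eh: "mat_norm1 E \<le> h" and h1: "h \<le> 1"
    and Sv: "Sm *v v = v" and Av: "(Sm ** D ** Sm) *v v = 0"
    and inv: "invertible (D + E - mat_scale c Pm)"
  defines "d \<equiv> mat_norm1 D" and "N \<equiv> real CARD('n)"
  shows "vec_norm1 v \<le> h * (mat_norm1 (matrix_inv (D + E - mat_scale c Pm)) * (1 + (d + 1) * N * d)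
                              + N * d) * vec_norm1 v"
proof -
  define G where "G = D + E - mat_scale c Pm"
  define w where "w = Pm *v (D *v v)"
  define u where "u = v + (1/c) *s w"
  have h0: "0 \<le> h" using ch norm_ge_zero order_trans by blast
  have d0: "0 \<le> d" by (simp add: d_def mat_norm1_nonneg)
  have "vec_norm1 w \<le> N * vec_norm1 (D *v v)"
    using vec_norm1_mult[of Pm "D *v v"] by (simp add: w_def N_def mat_norm1_Pm)
  also have "\<dots> \<le> N * (d * vec_norm1 v)"
    unfolding d_def by (intro mult_left_mono vec_norm1_mult) (simp add: N_def)
  finally have w: "vec_norm1 w \<le> N * d * vec_norm1 v"
    by (simp add: mult.assoc)
  have "mat_norm1 (D + E) \<le> d + 1"
    using mat_norm1_add[of D E] Eh h1 unfolding d_def by linarith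
  then have "vec_norm1 ((D + E) *v w) \<le> (d + 1) * (N * d * vec_norm1 v)"
    using w d0 by (intro order_trans[OF vec_norm1_mult] mult_mono)
      (auto simp: mat_norm1_nonneg vec_norm1_nonneg)
  then have "vec_norm1 ((1/c) *s ((D + E) *v w)) \<le> h * ((d + 1) * (N * d * vec_norm1 v))"
    unfolding vec_norm1_scale using ch h0 by (intro mult_mono) (auto simp: vec_norm1_nonneg)
  moreover have "vec_norm1 (E *v v) \<le> h * vec_norm1 v"
    by (rule order_trans[OF vec_norm1_mult mult_right_mono[OF Eh vec_norm1_nonneg]])
  ultimately have "vec_norm1 (G *v u) \<le> h * (1 + (d + 1) * N * d) * vec_norm1 v"
    using vec_norm1_add[of "E *v v" "(1/c) *s ((D + E) *v w)"]
    unfolding G_def u_def w_def kernel_vector_identity[OF c Sv Av] by (simp add: algebra_simps)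
  then have "vec_norm1 (matrix_inv G *v (G *v u))
               \<le> mat_norm1 (matrix_inv G) * (h * (1 + (d + 1) * N * d) * vec_norm1 v)"
    by (rule order_trans[OF vec_norm1_mult mult_left_mono]) (simp_all add: mat_norm1_nonneg)
  then have "vec_norm1 u \<le> mat_norm1 (matrix_inv G) * (h * (1 + (d + 1) * N * d) * vec_norm1 v)"
    by (simp add: matrix_vector_mul_assoc matrix_inv_inverse(2)[OF inv[folded G_def]])
  moreover have "vec_norm1 v \<le> vec_norm1 u + cmod (1/c) * vec_norm1 w"
    using vec_norm1_diff[of u "(1/c) *s w"] by (simp add: u_def vec_norm1_scale)
  moreover have "cmod (1/c) * vec_norm1 w \<le> h * (N * d * vec_norm1 v)"
    using ch w h0 by (intro mult_mono) (auto simp: vec_norm1_nonneg)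
  ultimately show ?thesis
    unfolding G_def by (simp add: algebra_simps)
qed

lemma perturbed_inverse_unbounded:
  fixes D :: "complex^'n::finite^'n" and M :: real
  assumes "\<not> nonsing_on_S (Sm ** D ** Sm)"
  obtains \<delta> where "0 < \<delta>"
    and "\<And>c E h. c \<noteq> 0 \<Longrightarrow> cmod (1/c) \<le> h \<Longrightarrow> mat_norm1 E \<le> h \<Longrightarrow> h < \<delta> \<Longrightarrow>
           invertible (D + E - mat_scale c Pm) \<Longrightarrow> M < mat_norm1 (matrix_inv (D + E - mat_scale c Pm))"
proof -
  obtain v where Sv: "Sm *v v = v" and Av: "(Sm ** D ** Sm) *v v = 0" and "v \<noteq> 0"
    using assms unfolding nonsing_on_S_def by blast
  then have v: "0 < vec_norm1 v"
    using vec_norm1_nonneg[of v] vec_norm1_eq_0_iff[of v] by linarith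
  define d N where "d = mat_norm1 D" and "N = real CARD('n)"
  define K where "K = \<bar>M\<bar> * (1 + (d + 1) * N * d) + N * d"
  have K: "0 \<le> K"
    by (simp add: K_def d_def N_def mat_norm1_nonneg)
  show thesis
  proof
    show "0 < min 1 (1 / (K + 1))" using K by simp
    fix c h and E :: "complex^'n^'n"
    assume c: "c \<noteq> 0" and ch: "cmod (1/c) \<le> h" and Eh: "mat_norm1 E \<le> h"
      and h\<delta>: "h < min 1 (1 / (K + 1))" and inv: "invertible (D + E - mat_scale c Pm)"
    have h0: "0 \<le> h" using ch norm_ge_zero order_trans by blast
    have "h * (K + 1) < 1" using h\<delta> K by (simp add: field_simps)
    then have hK: "h * K < 1" using h0 by (simp add: algebra_simps)
    show "M < mat_norm1 (matrix_inv (D + E - mat_scale c Pm))"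
    proof (rule ccontr)
      assume "\<not> ?thesis"
      then have "mat_norm1 (matrix_inv (D + E - mat_scale c Pm)) * (1 + (d + 1) * N * d) + N * d \<le> K"
        unfolding K_def by (intro add_right_mono mult_right_mono) (auto simp: d_def N_def mat_norm1_nonneg)
      then have "h * (mat_norm1 (matrix_inv (D + E - mat_scale c Pm)) * (1 + (d + 1) * N * d) + N * d)
                   * vec_norm1 v \<le> h * K * vec_norm1 v"
        using h0 v by (intro mult_left_mono mult_right_mono) auto
      moreover have "h \<le> 1"
        using h\<delta> by simp
      ultimately have "vec_norm1 v \<le> h * K * vec_norm1 v"
        using kernel_vector_estimate[OF c ch Eh _ Sv Av inv] unfolding d_def N_def by linarith
      with hK v show False
        by (simp add: mult_le_cancel_right1)
    qed
  qed
qed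

section \<open>The Bessel series\<close>

lemma summable_norm_power_series_fact_bounded:
  fixes a :: "nat \<Rightarrow> complex"
  assumes a: "\<And>m. cmod (a m) \<le> 1 / fact m"
  shows "summable (\<lambda>m. norm (a m * w^m))"
proof (rule summable_comparison_test[OF _ summable_exp[of "cmod w"]])
  show "\<exists>N. \<forall>m\<ge>N. norm (norm (a m * w^m)) \<le> inverse (fact m) * cmod w ^ m"
    using a by (intro exI allI impI) (simp add: norm_mult norm_power divide_inverse mult_right_mono)
qed

lemma holomorphic_power_series_fact_bounded:
  fixes a :: "nat \<Rightarrow> complex"
  assumes a: "\<And>m. cmod (a m) \<le> 1 / fact m"
  shows "(\<lambda>w. \<Sum>m. a m * w^m) holomorphic_on S"
proof -
  have "((\<lambda>w. \<Sum>m. a m * w^m) has_field_derivative (\<Sum>m. diffs a m * w^m)) (at w)" for w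
    by (rule termdiffs_strong_converges_everywhere
        summable_norm_cancel[OF summable_norm_power_series_fact_bounded[OF a]])+
  then show ?thesis
    unfolding holomorphic_on_def field_differentiable_def using has_field_derivative_at_within by blast
qed

lemma power_series_fact_bounded_minus_const:
  fixes a :: "nat \<Rightarrow> complex"
  assumes a: "\<And>m. cmod (a m) \<le> 1 / fact m" and w: "cmod w \<le> 1"
  shows "cmod ((\<Sum>m. a m * w^m) - a 0) \<le> exp 1 * cmod w"
proof -
  have a': "cmod (a (Suc m)) \<le> 1 / fact m" for m
    using a[of "Suc m"] by (rule order_trans) (simp add: divide_left_mono fact_mono)
  have sn: "summable (\<lambda>m. norm (a (Suc m) * w^m))"
    by (rule summable_norm_power_series_fact_bounded[OF a'])
  have "(\<Sum>m. a m * w^m) - a 0 = (\<Sum>m. a (Suc m) * w^(Suc m))"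
    using suminf_split_head[OF summable_norm_cancel[OF summable_norm_power_series_fact_bounded[OF a]]]
    by simp
  also have "\<dots> = w * (\<Sum>m. a (Suc m) * w^m)"
    using suminf_mult[OF summable_norm_cancel[OF sn], of w] by (simp add: mult_ac)
  finally have eq: "(\<Sum>m. a m * w^m) - a 0 = w * (\<Sum>m. a (Suc m) * w^m)" .
  have "norm (\<Sum>m. a (Suc m) * w^m) \<le> (\<Sum>m. norm (a (Suc m) * w^m))"
    by (rule summable_norm[OF sn])
  also have "\<dots> \<le> (\<Sum>m. inverse (fact m))"
  proof (rule suminf_le[OF _ sn])
    show "norm (a (Suc m) * w^m) \<le> inverse (fact m)" for m
      using mult_mono[OF a'[of m] power_le_one[OF norm_ge_zero w]]
      by (simp add: norm_mult norm_power divide_inverse)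
    show "summable (\<lambda>m. inverse (fact m :: real))"
      using summable_exp[of "1::real"] by simp
  qed
  also have "\<dots> = exp 1"
    using exp_converges[of "1::real"] by (simp add: sums_iff divide_inverse)
  finally show ?thesis
    unfolding eq norm_mult by (simp add: mult.commute mult_left_mono)
qed

definition J0_coeff :: "nat \<Rightarrow> complex" where
  "J0_coeff m = (-1)^m / (of_nat (fact m))^2"

definition Y0_coeff :: "nat \<Rightarrow> complex" where
  "Y0_coeff m = (-1)^(m+1) * harm m / (of_nat (fact m))^2"

definition J0_series :: "complex \<Rightarrow> complex" where
  "J0_series w = (\<Sum>m. J0_coeff m * w^m)"

definition Y0_series :: "complex \<Rightarrow> complex" where
  "Y0_series w = (\<Sum>m. Y0_coeff m * w^m)"

lemma norm_J0_coeff_le: "cmod (J0_coeff m) \<le> 1 / fact m"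
proof -
  have "(fact m :: real) \<le> (fact m)^2"
    by (simp add: power2_eq_square)
  then show ?thesis
    by (simp add: J0_coeff_def norm_divide norm_power divide_left_mono)
qed

lemma norm_Y0_coeff_le: "cmod (Y0_coeff m) \<le> 1 / fact m"
proof -
  have "harm m = (\<Sum>k=1..m. inverse (real k))"
    by (simp add: harm_def)
  also have "\<dots> \<le> (\<Sum>k=1..m. 1)"
    by (intro sum_mono) (auto simp: inverse_le_1_iff)
  also have "\<dots> = real m"
    by simp
  also have "real m \<le> fact m"
    by (metis fact_ge_self of_nat_fact of_nat_le_iff)
  finally have "harm m / (fact m :: real)^2 \<le> fact m / (fact m)^2"
    by (simp add: divide_right_mono)
  then show ?thesis
    by (simp add: Y0_coeff_def norm_divide norm_power norm_mult norm_harm power2_eq_square)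
qed

lemma J0_series_holomorphic [holomorphic_intros]:
  "f holomorphic_on S \<Longrightarrow> (\<lambda>z. J0_series (f z)) holomorphic_on S"
  using holomorphic_on_compose[of f S J0_series]
    holomorphic_power_series_fact_bounded[OF norm_J0_coeff_le, of "f ` S"]
  by (simp add: J0_series_def[abs_def] o_def)

lemma Y0_series_holomorphic [holomorphic_intros]:
  "f holomorphic_on S \<Longrightarrow> (\<lambda>z. Y0_series (f z)) holomorphic_on S"
  using holomorphic_on_compose[of f S Y0_series]
    holomorphic_power_series_fact_bounded[OF norm_Y0_coeff_le, of "f ` S"]
  by (simp add: Y0_series_def[abs_def] o_def)

lemma norm_J0_series_minus_1_le: "cmod w \<le> 1 \<Longrightarrow> cmod (J0_series w - 1) \<le> exp 1 * cmod w"
  using power_series_fact_bounded_minus_const[OF norm_J0_coeff_le]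
  by (simp add: J0_series_def J0_coeff_def)

lemma norm_Y0_series_le: "cmod w \<le> 1 \<Longrightarrow> cmod (Y0_series w) \<le> exp 1 * cmod w"
  using power_series_fact_bounded_minus_const[OF norm_Y0_coeff_le]
  by (simp add: Y0_series_def Y0_coeff_def harm_expand)

lemma besselJ0_eq: "besselJ0 z = J0_series ((z/2)^2)"
  unfolding besselJ0_def J0_series_def J0_coeff_def
  by (intro arg_cong[where f=suminf] ext) (simp add: power_mult)

lemma besselY0_eq:
  "besselY0 z = (2 / of_real pi) * ((Ln (z/2) + euler_mascheroni) * J0_series ((z/2)^2)
                 + Y0_series ((z/2)^2))"
  unfolding besselY0_def besselJ0_eq Y0_series_def Y0_coeff_def
  by (intro arg_cong[where f="\<lambda>s. (2 / of_real pi) * ((Ln (z/2) + euler_mascheroni) * J0_series ((z/2)^2) + s)"]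
        arg_cong[where f=suminf] ext) (simp add: power_mult)

section \<open>The Green's function near \<open>\<lambda> = 0\<close>\<close>

text \<open>\<open>- G\<^sub>\<lambda>(x) = ln |x| / (2\<pi>) - g(\<lambda>) + green_remainder |x| \<lambda>\<close>
  (\<open>minus_greenG_eq\<close>), and the remainder is \<open>O(\<lambda>\<^sup>2 log \<lambda>)\<close> because \<open>J0_series w - 1\<close>
  and \<open>Y0_series w\<close> are \<open>O(w)\<close>.\<close>

definition green_remainder :: "real \<Rightarrow> complex \<Rightarrow> complex" where
  "green_remainder r lam = (J0_series ((lam * of_real r / 2)^2) - 1) *
      (- (\<i>/4) + (Ln (lam/2) + of_real (ln r) + euler_mascheroni) / (2 * of_real pi))
    + Y0_series ((lam * of_real r / 2)^2) / (2 * of_real pi)"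

lemma minus_greenG_eq:
  assumes r: "0 < r" and x: "norm x = r" and lam: "lam \<noteq> 0"
  shows "- greenG lam x = of_real (ln r / (2*pi)) + green_remainder r lam - gfun lam"
proof -
  have "Ln (lam * of_real r / 2) = Ln (of_real r * (lam/2))"
    by (simp add: mult.commute)
  also have "\<dots> = of_real (ln r) + Ln (lam/2)"
    using Ln_times_of_real[of r "lam/2"] Ln_of_real[OF r] r lam by simp
  finally have L: "Ln (lam * of_real r / 2) = of_real (ln r) + Ln (lam/2)" .
  define J Y LL where "J = J0_series ((lam * of_real r / 2)^2)"
    and "Y = Y0_series ((lam * of_real r / 2)^2)" and "LL = Ln (lam/2)"
  have "- greenG lam x = - ((\<i>/4) * (J + \<i> * ((2 / of_real pi) *
                           ((of_real (ln r) + LL + euler_mascheroni) * J + Y))))"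
    unfolding greenG_def hankel10_def besselJ0_eq besselY0_eq x L J_def Y_def LL_def by simp
  also have "\<dots> = of_real (ln r / (2*pi))
      + ((J - 1) * (- (\<i>/4) + (LL + of_real (ln r) + euler_mascheroni) / (2 * of_real pi))
         + Y / (2 * of_real pi))
      - (- (1/(2 * of_real pi)) * LL + \<i>/4 - euler_mascheroni/(2 * of_real pi))"
    by (simp add: field_simps)
  finally show ?thesis
    unfolding green_remainder_def gfun_def J_def Y_def LL_def .
qed

definition Gamma_remainder :: "('n::finite \<Rightarrow> real^2) \<Rightarrow> complex \<Rightarrow> complex^'n^'n" where
  "Gamma_remainder y lam = (\<chi> j k. if j = k then 0 else green_remainder (dist (y j) (y k)) lam)"

lemma GammaM_eq:
  fixes y :: "'n::finite \<Rightarrow> real^2"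
  assumes y: "inj y" and lam: "lam \<noteq> 0"
  shows "GammaM y \<alpha> lam
           = Dtilde y \<alpha> + Gamma_remainder y lam - mat_scale (of_nat CARD('n) * gfun lam) Pm"
proof -
  have "GammaM y \<alpha> lam $ j $ k
      = (Dtilde y \<alpha> + Gamma_remainder y lam - mat_scale (of_nat CARD('n) * gfun lam) Pm) $ j $ k"
    for j k
  proof (cases "j = k")
    case False
    then have r: "0 < dist (y j) (y k)"
      using y by (simp add: inj_eq)
    have "GammaM y \<alpha> lam $ j $ k = - greenG lam (y j - y k)"
      using False by (simp add: GammaM_def)
    also have "\<dots> = of_real (ln (dist (y j) (y k)) / (2*pi))
                     + green_remainder (dist (y j) (y k)) lam - gfun lam"
      by (rule minus_greenG_eq[OF r _ lam]) (simp add: dist_norm)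
    finally show ?thesis
      using False by (simp add: Dtilde_def Gamma_remainder_def Pm_def mat_scale_def)
  qed (simp add: GammaM_def Dtilde_def Gamma_remainder_def Pm_def mat_scale_def)
  then show ?thesis
    by (simp add: vec_eq_iff)
qed

lemma norm_Ln_le: "z \<noteq> 0 \<Longrightarrow> cmod (Ln z) \<le> \<bar>ln (cmod z)\<bar> + pi"
  using cmod_le[of "Ln z"] mpi_less_Im_Ln[of z] Im_Ln_le_pi[of z] by (simp add: Re_Ln)

lemma norm_gfun_le:
  assumes "lam \<noteq> 0"
  shows "cmod (gfun lam) \<le> \<bar>ln (cmod lam / 2)\<bar> + pi + cmod (euler_mascheroni :: complex) + 1"
proof -
  have "cmod (gfun lam) \<le> cmod (Ln (lam/2)) / (2*pi) + 1/4 + cmod (euler_mascheroni :: complex) / (2*pi)"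
    unfolding gfun_def using norm_triangle_ineq[of "- (1/(2 * of_real pi)) * Ln (lam/2)" "\<i>/4"]
      norm_triangle_ineq4[of "- (1/(2 * of_real pi)) * Ln (lam/2) + \<i>/4" "euler_mascheroni/(2 * of_real pi)"]
    by (simp add: norm_mult norm_divide)
  also have "\<dots> \<le> cmod (Ln (lam/2)) + 1/4 + cmod (euler_mascheroni :: complex)"
    using pi_gt3 mult_left_mono[of 1 "2*pi"] by (intro add_mono) (simp_all add: divide_le_eq)
  finally show ?thesis
    using norm_Ln_le[of "lam/2"] assms by (simp add: norm_divide)
qed

lemma norm_gfun_ge:
  assumes "lam \<noteq> 0"
  shows "\<bar>ln (cmod lam / 2)\<bar> / (2*pi) - 1/4 - cmod (euler_mascheroni :: complex) / (2*pi)
           \<le> cmod (gfun lam)"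
proof -
  have "\<bar>ln (cmod lam / 2)\<bar> \<le> cmod (Ln (lam/2))"
    using abs_Re_le_cmod[of "Ln (lam/2)"] assms by (simp add: norm_divide)
  then have "\<bar>ln (cmod lam / 2)\<bar> / (2*pi) \<le> cmod (Ln (lam/2)) / (2*pi)"
    by (simp add: divide_right_mono)
  moreover have "cmod (Ln (lam/2)) / (2*pi) - 1/4 - cmod (euler_mascheroni :: complex) / (2*pi)
                   \<le> cmod (gfun lam)"
  proof -
    define a b c where "a = - (1/(2 * of_real pi)) * Ln (lam/2)" and "b = \<i>/4"
      and "c = (euler_mascheroni :: complex) / (2 * of_real pi)"
    have "cmod a \<le> cmod (a + b - c) + cmod c + cmod b"
      using norm_triangle_ineq[of "a + b - c" "c - b"] norm_triangle_ineq4[of c b] by simp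
    then show ?thesis
      unfolding gfun_def a_def b_def c_def by (simp add: norm_mult norm_divide)
  qed
  ultimately show ?thesis
    by linarith
qed

lemma filterlim_cmod_at_right_0: "filterlim cmod (at_right 0) (at (0::complex))"
  unfolding filterlim_at
  by (auto simp: eventually_at_filter intro: tendsto_norm_zero tendsto_ident_at)

lemma gfun_tendsto_infinity: "filterlim (\<lambda>lam. cmod (gfun lam)) at_top (at 0)"
proof (rule filterlim_at_top_mono)
  have "filterlim (\<lambda>\<rho>. \<bar>ln (\<rho>/2)\<bar> / (2*pi) - 1/4 - cmod (euler_mascheroni :: complex) / (2*pi))
          at_top (at_right 0)"
    by real_asymp
  then show "filterlim (\<lambda>lam. \<bar>ln (cmod lam/2)\<bar> / (2*pi) - 1/4
                                 - cmod (euler_mascheroni :: complex) / (2*pi)) at_top (at 0)"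
    by (rule filterlim_compose[OF _ filterlim_cmod_at_right_0])
  show "\<forall>\<^sub>F lam in at 0. \<bar>ln (cmod lam/2)\<bar> / (2*pi) - 1/4
                         - cmod (euler_mascheroni :: complex) / (2*pi) \<le> cmod (gfun lam)"
    unfolding eventually_at_filter by (intro always_eventually allI impI norm_gfun_ge)
qed

lemma norm_green_remainder_le:
  assumes r: "0 < r" and lam: "lam \<noteq> 0" and small: "cmod lam * r \<le> 2"
  defines "X \<equiv> \<bar>ln (cmod lam / 2)\<bar> + pi + \<bar>ln r\<bar> + cmod (euler_mascheroni :: complex) + 2"
  shows "cmod (green_remainder r lam) \<le> exp 1 * (cmod lam * r / 2)^2 * X"
proof -
  define q where "q = (lam * of_real r / 2)^2"
  define T where "T = - (\<i>/4) + (Ln (lam/2) + of_real (ln r) + euler_mascheroni) / (2 * of_real pi)"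
  have q: "cmod q = (cmod lam * r / 2)^2"
    using r by (simp add: q_def norm_mult norm_power norm_divide)
  moreover have "0 \<le> cmod lam * r / 2" "cmod lam * r / 2 \<le> 1"
    using small r by auto
  ultimately have q1: "cmod q \<le> 1"
    by (simp add: power_le_one)
  have div: "a / (2*pi) \<le> a" if "0 \<le> a" for a :: real
    using that pi_gt3 mult_left_mono[of 1 "2*pi" a] by (simp add: divide_le_eq)
  have "cmod T \<le> 1/4 + cmod (Ln (lam/2) + of_real (ln r) + euler_mascheroni) / (2*pi)"
    unfolding T_def
    using norm_triangle_ineq[of "- (\<i>/4)" "(Ln (lam/2) + of_real (ln r) + euler_mascheroni) / (2 * of_real pi)"]
    by (simp add: norm_divide)
  also have "\<dots> \<le> 1/4 + cmod (Ln (lam/2) + of_real (ln r) + euler_mascheroni)"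
    by (simp add: div)
  also have "\<dots> \<le> 1/4 + (\<bar>ln (cmod lam / 2)\<bar> + pi) + \<bar>ln r\<bar> + cmod (euler_mascheroni :: complex)"
    using norm_triangle_ineq[of "Ln (lam/2) + of_real (ln r)" euler_mascheroni]
      norm_triangle_ineq[of "Ln (lam/2)" "of_real (ln r)"] norm_Ln_le[of "lam/2"] lam
    by (simp add: norm_divide)
  finally have T: "cmod T + 1 \<le> X"
    unfolding X_def by simp
  have "cmod (green_remainder r lam) \<le> cmod (J0_series q - 1) * cmod T + cmod (Y0_series q)"
    unfolding green_remainder_def q_def[symmetric] T_def[symmetric]
    using norm_triangle_ineq[of "(J0_series q - 1) * T" "Y0_series q / (2 * of_real pi)"]
      div[of "cmod (Y0_series q)"] by (simp add: norm_mult norm_divide)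
  also have "\<dots> \<le> exp 1 * cmod q * cmod T + exp 1 * cmod q"
    using norm_J0_series_minus_1_le[OF q1] norm_Y0_series_le[OF q1]
    by (intro add_mono mult_right_mono) auto
  also have "\<dots> = exp 1 * cmod q * (cmod T + 1)"
    by (simp add: algebra_simps)
  also have "\<dots> \<le> exp 1 * cmod q * X"
    using T by (intro mult_left_mono) auto
  finally show ?thesis
    unfolding q .
qed

lemma green_remainder_gfun_tendsto_0:
  assumes r: "0 < r"
  shows "((\<lambda>lam. cmod (green_remainder r lam) * cmod (gfun lam)) \<longlongrightarrow> 0) (at 0)"
proof (rule Lim_null_comparison)
  define B where "B = pi + \<bar>ln r\<bar> + cmod (euler_mascheroni :: complex) + 2"
  have B: "0 \<le> B" unfolding B_def using pi_gt_zero by simp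
  have "((\<lambda>\<rho>. \<rho>^2 * (\<bar>ln (\<rho>/2)\<bar> + B)^2) \<longlongrightarrow> 0) (at_right 0)"
    by real_asymp
  from tendsto_mult_right_zero[OF filterlim_compose[OF this filterlim_cmod_at_right_0]]
  show "((\<lambda>lam. exp 1 * (r / 2)^2 * ((cmod lam)^2 * (\<bar>ln (cmod lam/2)\<bar> + B)^2)) \<longlongrightarrow> 0) (at 0)" .
  have "eventually (\<lambda>lam. lam \<noteq> 0 \<and> cmod lam * r \<le> 2) (at 0)"
    unfolding eventually_at using r by (intro exI[of _ "2/r"]) (auto simp: field_simps)
  then show "eventually (\<lambda>lam. norm (cmod (green_remainder r lam) * cmod (gfun lam))
                 \<le> exp 1 * (r / 2)^2 * ((cmod lam)^2 * (\<bar>ln (cmod lam/2)\<bar> + B)^2)) (at 0)"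
  proof (rule eventually_mono)
    fix lam assume lam: "lam \<noteq> 0 \<and> cmod lam * r \<le> 2"
    have "cmod (green_remainder r lam) \<le> exp 1 * (cmod lam * r / 2)^2 * (\<bar>ln (cmod lam/2)\<bar> + B)"
      using norm_green_remainder_le[OF r] lam by (simp add: B_def add_ac)
    moreover have "cmod (gfun lam) \<le> \<bar>ln (cmod lam/2)\<bar> + B"
      using norm_gfun_le[of lam] lam by (simp add: B_def)
    ultimately have "cmod (green_remainder r lam) * cmod (gfun lam)
        \<le> (exp 1 * (cmod lam * r / 2)^2 * (\<bar>ln (cmod lam/2)\<bar> + B)) * (\<bar>ln (cmod lam/2)\<bar> + B)"
      by (rule mult_mono) (use B in auto)
    then show "norm (cmod (green_remainder r lam) * cmod (gfun lam))
                 \<le> exp 1 * (r / 2)^2 * ((cmod lam)^2 * (\<bar>ln (cmod lam/2)\<bar> + B)^2)"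
      by (simp add: power2_eq_square mult_ac)
  qed
qed

lemma Gamma_remainder_gfun_tendsto_0:
  fixes y :: "'n::finite \<Rightarrow> real^2"
  assumes y: "inj y"
  shows "((\<lambda>lam. mat_norm1 (Gamma_remainder y lam) * cmod (gfun lam)) \<longlongrightarrow> 0) (at 0)"
proof -
  have "((\<lambda>lam. cmod (Gamma_remainder y lam $ j $ k) * cmod (gfun lam)) \<longlongrightarrow> 0) (at 0)" for j k
  proof (cases "j = k")
    case False
    then have "0 < dist (y j) (y k)"
      using y by (simp add: inj_eq)
    then show ?thesis
      using green_remainder_gfun_tendsto_0 False by (simp add: Gamma_remainder_def)
  qed (simp add: Gamma_remainder_def)
  then show ?thesis
    unfolding mat_norm1_def sum_distrib_right by (intro tendsto_null_sum)
qed

section \<open>Holomorphy and derivatives on the real axis\<close>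

lemma holomorphic_det:
  fixes M :: "complex \<Rightarrow> complex^'n::finite^'n"
  assumes "\<And>i j. (\<lambda>z. M z $ i $ j) holomorphic_on S"
  shows "(\<lambda>z. det (M z)) holomorphic_on S"
  unfolding det_def by (intro holomorphic_intros assms)

lemma matrix_inv_entry_cramer:
  fixes A :: "complex^'n::finite^'n"
  assumes d: "det A \<noteq> 0"
  shows "matrix_inv A $ i $ k = det (\<chi> p q. if q = i then (if p = k then 1 else 0) else A $ p $ q) / det A"
proof -
  define b :: "complex^'n" where "b = (\<chi> p. if p = k then 1 else 0)"
  have "A *v (matrix_inv A *v b) = b"
    using invertible_det_nz d matrix_inv_inverse(1) by (metis matrix_vector_mul_assoc matrix_vector_mul_lid)
  then have "(matrix_inv A *v b) $ i = det (\<chi> p q. if q = i then b $ p else A $ p $ q) / det A"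
    using cramer[OF d] by simp
  moreover have "(matrix_inv A *v b) $ i = matrix_inv A $ i $ k"
    by (simp add: b_def matrix_vector_mult_def if_distrib[of "(*) _"] cong: if_cong)
  ultimately show ?thesis
    by (simp add: b_def cong: if_cong)
qed

lemma holomorphic_matrix_inv_entry:
  fixes M :: "complex \<Rightarrow> complex^'n::finite^'n"
  assumes holo: "\<And>i j. (\<lambda>z. M z $ i $ j) holomorphic_on S"
    and inv: "\<And>z. z \<in> S \<Longrightarrow> invertible (M z)"
  shows "(\<lambda>z. matrix_inv (M z) $ i $ k) holomorphic_on S"
proof -
  have d: "det (M z) \<noteq> 0" if "z \<in> S" for z
    using inv[OF that] invertible_det_nz by blast
  have num: "(\<lambda>z. det (\<chi> p q. if q = i then (if p = k then 1 else 0) else M z $ p $ q)) holomorphic_on S"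
  proof (rule holomorphic_det)
    fix p q
    show "(\<lambda>z. (\<chi> p q. if q = i then (if p = k then 1 else 0) else M z $ p $ q) $ p $ q) holomorphic_on S"
      by (cases "q = i") (simp_all add: holo)
  qed
  have "(\<lambda>z. det (\<chi> p q. if q = i then (if p = k then 1 else 0) else M z $ p $ q) / det (M z))
          holomorphic_on S"
    by (intro holomorphic_on_divide num holomorphic_det holo d)
  then show ?thesis
    by (rule holomorphic_transform) (simp add: matrix_inv_entry_cramer d)
qed

lemma GammaM_entry_holomorphic:
  fixes y :: "'n::finite \<Rightarrow> real^2"
  assumes y: "inj y"
  shows "(\<lambda>lam. GammaM y \<alpha> lam $ j $ k) holomorphic_on - \<real>\<^sub>\<le>\<^sub>0"
proof (cases "j = k")
  case True
  then show ?thesis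
    by (simp add: GammaM_def gfun_def)
      (intro holomorphic_intros, auto simp: complex_nonpos_Reals_iff)
next
  case False
  define r where "r = dist (y j) (y k)"
  have r: "0 < r"
    using False y by (simp add: r_def inj_eq)
  have "(\<lambda>lam. GammaM y \<alpha> lam $ j $ k) = (\<lambda>lam. - ((\<i>/4) * (J0_series ((lam * of_real r/2)^2)
          + \<i> * ((2/of_real pi) * ((Ln (lam * of_real r/2) + euler_mascheroni)
               * J0_series ((lam * of_real r/2)^2) + Y0_series ((lam * of_real r/2)^2))))))"
    using False by (simp add: GammaM_def greenG_def hankel10_def besselJ0_eq besselY0_eq r_def dist_norm)
  then show ?thesis
    by simp (intro holomorphic_intros, use r in \<open>auto simp: complex_nonpos_Reals_iff mult_le_0_iff\<close>)
qed

lemma rderiv_funpow_of_real: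
  fixes F :: "complex \<Rightarrow> complex"
  assumes holo: "F holomorphic_on U" and U: "open U" and t: "complex_of_real t \<in> U"
  shows "(rderiv ^^ l) (\<lambda>s. F (of_real s)) t = (deriv ^^ l) F (of_real t)"
    and "((rderiv ^^ l) (\<lambda>s. F (of_real s)) has_vector_derivative
           (rderiv ^^ Suc l) (\<lambda>s. F (of_real s)) t) (at t)"
proof -
  define I :: "real set" where "I = of_real -` U"
  have I: "open I"
    unfolding I_def by (intro continuous_open_vimage U continuous_intros)
  have deriv: "((\<lambda>s. (deriv ^^ l) F (of_real s)) has_vector_derivative (deriv ^^ Suc l) F (of_real s)) (at s)"
    if "s \<in> I" for l s
    using has_vector_derivative_real_field[OF holomorphic_derivI[OF holomorphic_higher_deriv[OF holo U] U]]
      that by (simp add: I_def)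
  have eq: "\<forall>s\<in>I. (rderiv ^^ l) (\<lambda>s. F (of_real s)) s = (deriv ^^ l) F (of_real s)" for l
  proof (induction l)
    case (Suc l)
    show ?case
    proof
      fix s assume s: "s \<in> I"
      have "((rderiv ^^ l) (\<lambda>s. F (of_real s)) has_vector_derivative (deriv ^^ Suc l) F (of_real s)) (at s)"
        by (rule has_vector_derivative_transform_within_open[OF deriv[OF s] I s]) (use Suc in auto)
      then show "(rderiv ^^ Suc l) (\<lambda>s. F (of_real s)) s = (deriv ^^ Suc l) F (of_real s)"
        by (simp add: rderiv_def vector_derivative_at)
    qed
  qed simp
  have tI: "t \<in> I" using t by (simp add: I_def)
  show "(rderiv ^^ l) (\<lambda>s. F (of_real s)) t = (deriv ^^ l) F (of_real t)"
    using eq tI by blast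
  show "((rderiv ^^ l) (\<lambda>s. F (of_real s)) has_vector_derivative
           (rderiv ^^ Suc l) (\<lambda>s. F (of_real s)) t) (at t)"
    using has_vector_derivative_transform_within_open[OF deriv[OF tI] I tI] eq[of l] eq[of "Suc l"] tI
    by simp
qed

lemma norm_rderiv_funpow_of_real_le:
  fixes F :: "complex \<Rightarrow> complex"
  assumes holo: "F holomorphic_on U" and U: "open U" and cb: "cball (complex_of_real t) \<rho> \<subseteq> U"
    and \<rho>: "0 < \<rho>" and bnd: "\<And>z. z \<in> U \<Longrightarrow> cmod (F z) \<le> M"
  shows "cmod ((rderiv ^^ l) (\<lambda>s. F (of_real s)) t) \<le> fact l * M / \<rho>^l"
proof -
  have "cmod ((deriv ^^ l) F (of_real t)) \<le> fact l * M / \<rho>^l"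
  proof (rule Cauchy_inequality)
    show "F holomorphic_on ball (of_real t) \<rho>"
      using holomorphic_on_subset[OF holo] cb ball_subset_cball by blast
    show "continuous_on (cball (of_real t) \<rho>) F"
      by (rule holomorphic_on_imp_continuous_on[OF holomorphic_on_subset[OF holo cb]])
    show "cmod (F z) \<le> M" if "cmod (of_real t - z) = \<rho>" for z
      using that cb bnd by (auto simp: dist_norm)
  qed (rule \<rho>)
  moreover have "of_real t \<in> U"
    using cb \<rho> by auto
  ultimately show ?thesis
    using rderiv_funpow_of_real(1)[OF holo U] by simp
qed

lemma cball_subset_right_half_ball:
  assumes "0 < t" and "t < \<delta>/2"
  shows "cball (complex_of_real t) (t/2) \<subseteq> {z. 0 < Re z} \<inter> ball 0 \<delta>"
proof
  fix z assume "z \<in> cball (complex_of_real t) (t/2)"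
  then have "cmod (complex_of_real t - z) \<le> t/2"
    by (simp add: dist_norm)
  then have "\<bar>t - Re z\<bar> \<le> t/2" and "cmod z \<le> t + t/2"
    using abs_Re_le_cmod[of "complex_of_real t - z"] norm_triangle_ineq2[of z "complex_of_real t"]
    by (auto simp: norm_minus_commute)
  moreover have "\<bar>t - Re z\<bar> \<le> t/2 \<Longrightarrow> 0 < Re z"
    using assms(1) by linarith
  ultimately show "z \<in> {z. 0 < Re z} \<inter> ball 0 \<delta>"
    using assms by auto
qed

lemma GammaM_inverse_derivative_bounds:
  fixes y :: "'n::finite \<Rightarrow> real^2" and \<alpha> :: "'n \<Rightarrow> real"
  assumes y: "inj y"
    and bounded: "eventually (\<lambda>lam. invertible (GammaM y \<alpha> lam)
                     \<and> mat_norm1 (matrix_inv (GammaM y \<alpha> lam)) \<le> M) (at 0)"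
  shows "\<exists>lam0 > 0. \<exists>C :: nat \<Rightarrow> real. \<forall>l j k. \<forall>t. 0 < t \<and> t < lam0 \<longrightarrow>
           ((rderiv ^^ l) (\<lambda>s. matrix_inv (GammaM y \<alpha> (complex_of_real s)) $ j $ k)
              has_vector_derivative
            (rderiv ^^ Suc l) (\<lambda>s. matrix_inv (GammaM y \<alpha> (complex_of_real s)) $ j $ k) t) (at t)
           \<and> cmod ((rderiv ^^ l) (\<lambda>s. matrix_inv (GammaM y \<alpha> (complex_of_real s)) $ j $ k) t)
               \<le> C l * t powi (- int l)"
proof -
  obtain \<delta> where \<delta>: "0 < \<delta>" and inv: "\<And>lam. lam \<noteq> 0 \<Longrightarrow> cmod lam < \<delta> \<Longrightarrow>
      invertible (GammaM y \<alpha> lam) \<and> mat_norm1 (matrix_inv (GammaM y \<alpha> lam)) \<le> M"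
    using bounded unfolding eventually_at by auto
  define U where "U = {z. 0 < Re z} \<inter> ball 0 \<delta>"
  have U: "open U"
    unfolding U_def by (intro open_Int open_halfspace_Re_gt open_ball)
  have inv_U: "invertible (GammaM y \<alpha> z) \<and> mat_norm1 (matrix_inv (GammaM y \<alpha> z)) \<le> M"
    if "z \<in> U" for z
    using inv[of z] that by (cases "z = 0") (auto simp: U_def)
  have "U \<subseteq> - \<real>\<^sub>\<le>\<^sub>0"
    by (auto simp: U_def complex_nonpos_Reals_iff)
  then have holo: "(\<lambda>z. matrix_inv (GammaM y \<alpha> z) $ j $ k) holomorphic_on U" for j k
    using inv_U by (intro holomorphic_matrix_inv_entry holomorphic_on_subset[OF GammaM_entry_holomorphic[OF y]])
      auto
  note cball = cball_subset_right_half_ball[of _ \<delta>, folded U_def]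
  show ?thesis
  proof (intro exI[of _ "\<delta>/2"] exI[of _ "\<lambda>l. fact l * M * 2^l"] conjI allI impI)
    fix l j k and t :: real assume t: "0 < t \<and> t < \<delta>/2"
    then show "((rderiv ^^ l) (\<lambda>s. matrix_inv (GammaM y \<alpha> (complex_of_real s)) $ j $ k)
                has_vector_derivative
              (rderiv ^^ Suc l) (\<lambda>s. matrix_inv (GammaM y \<alpha> (complex_of_real s)) $ j $ k) t) (at t)"
      using cball[of t] by (intro rderiv_funpow_of_real(2)[OF holo U]) auto
    have "cmod ((rderiv ^^ l) (\<lambda>s. matrix_inv (GammaM y \<alpha> (complex_of_real s)) $ j $ k) t)
            \<le> fact l * M / (t/2)^l"
      using t inv_U by (intro norm_rderiv_funpow_of_real_le[OF holo U cball])
        (auto intro: order_trans[OF norm_entry_le_mat_norm1])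
    also have "\<dots> = fact l * M * 2^l * t powi (- int l)"
      using t by (simp add: power_int_minus power_divide field_simps)
    finally show "cmod ((rderiv ^^ l) (\<lambda>s. matrix_inv (GammaM y \<alpha> (complex_of_real s)) $ j $ k) t)
                    \<le> fact l * M * 2^l * t powi (- int l)" .
  qed (use \<delta> in simp)
qed

section \<open>The inverse of \<open>\<Gamma>(\<lambda>)\<close> near \<open>\<lambda> = 0\<close>\<close>

lemma GammaM_perturbation:
  fixes y :: "'n::finite \<Rightarrow> real^2"
  assumes y: "inj y" and \<epsilon>: "0 < \<epsilon>"
  shows "eventually (\<lambda>lam.
           GammaM y \<alpha> lam
             = Dtilde y \<alpha> + Gamma_remainder y lam - mat_scale (of_nat CARD('n) * gfun lam) Pm
           \<and> of_nat CARD('n) * gfun lam \<noteq> 0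
           \<and> cmod (1 / (of_nat CARD('n) * gfun lam)) \<le> 1 / cmod (gfun lam)
           \<and> mat_norm1 (Gamma_remainder y lam) \<le> 1 / cmod (gfun lam)
           \<and> 1 / cmod (gfun lam) < \<epsilon>) (at 0)"
proof -
  have "eventually (\<lambda>lam. max 1 (1/\<epsilon>) < cmod (gfun lam)) (at 0)"
    by (rule eventually_compose_filterlim[OF eventually_gt_at_top gfun_tendsto_infinity])
  moreover have "eventually (\<lambda>lam. mat_norm1 (Gamma_remainder y lam) * cmod (gfun lam) < 1) (at 0)"
    by (rule order_tendstoD(2)[OF Gamma_remainder_gfun_tendsto_0[OF y]]) simp
  moreover have "eventually (\<lambda>lam. lam \<noteq> 0) (at (0::complex))"
    by (rule eventually_neq_at_within)
  ultimately show ?thesis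
  proof eventually_elim
    case (elim lam)
    then have g: "1 < cmod (gfun lam)" "1/\<epsilon> < cmod (gfun lam)"
      by auto
    have "cmod (gfun lam) \<le> real CARD('n) * cmod (gfun lam)"
      using mult_right_mono[of 1 "real CARD('n)" "cmod (gfun lam)"] by (simp add: Suc_le_eq)
    then have "cmod (1 / (of_nat CARD('n) * gfun lam)) \<le> 1 / cmod (gfun lam)"
      using g by (simp add: norm_divide norm_mult) (rule divide_left_mono, auto intro!: mult_pos_pos)
    moreover have "mat_norm1 (Gamma_remainder y lam) \<le> 1 / cmod (gfun lam)"
      using elim g by (auto simp: le_divide_eq mult.commute)
    moreover have "1 / cmod (gfun lam) < \<epsilon>"
      using g \<epsilon> by (auto simp: divide_less_eq mult.commute)
    ultimately show ?case
      using GammaM_eq[OF y, of lam] elim g by auto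
  qed
qed

lemma GammaM_inverse_expansion:
  fixes y :: "'n::finite \<Rightarrow> real^2"
  assumes y: "inj y" and ns: "nonsing_on_S (Sm ** Dtilde y \<alpha> ** Sm)"
  obtains C where "eventually (\<lambda>lam. invertible (GammaM y \<alpha> lam) \<and>
      mat_norm1 (matrix_inv (GammaM y \<alpha> lam) - inv_on_S (Sm ** Dtilde y \<alpha> ** Sm))
        \<le> C / cmod (gfun lam)) (at 0)"
proof -
  obtain \<delta> C where \<delta>: "0 < \<delta>" and expansion: "\<And>c E h. c \<noteq> 0 \<Longrightarrow> cmod (1/c) \<le> h \<Longrightarrow>
      mat_norm1 E \<le> h \<Longrightarrow> h < \<delta> \<Longrightarrow> invertible (Dtilde y \<alpha> + E - mat_scale c Pm) \<and>
      mat_norm1 (matrix_inv (Dtilde y \<alpha> + E - mat_scale c Pm) - inv_on_S (Sm ** Dtilde y \<alpha> ** Sm))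
        \<le> C * h"
    using perturbed_inverse_expansion[OF ns] by metis
  show thesis
  proof (rule that)
    show "eventually (\<lambda>lam. invertible (GammaM y \<alpha> lam) \<and>
        mat_norm1 (matrix_inv (GammaM y \<alpha> lam) - inv_on_S (Sm ** Dtilde y \<alpha> ** Sm))
          \<le> C / cmod (gfun lam)) (at 0)"
      using GammaM_perturbation[OF y \<delta>, of \<alpha>]
    proof eventually_elim
      case (elim lam)
      then have eq: "GammaM y \<alpha> lam = Dtilde y \<alpha> + Gamma_remainder y lam
                       - mat_scale (of_nat CARD('n) * gfun lam) Pm"
        by blast
      have "invertible (GammaM y \<alpha> lam) \<and>
          mat_norm1 (matrix_inv (GammaM y \<alpha> lam) - inv_on_S (Sm ** Dtilde y \<alpha> ** Sm))
            \<le> C * (1 / cmod (gfun lam))"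
        unfolding eq by (rule expansion) (use elim in blast)+
      then show ?case
        by simp
    qed
  qed
qed

lemma GammaM_inverse_bounded:
  fixes y :: "'n::finite \<Rightarrow> real^2"
  assumes y: "inj y" and ns: "nonsing_on_S (Sm ** Dtilde y \<alpha> ** Sm)"
  obtains M where "eventually (\<lambda>lam. invertible (GammaM y \<alpha> lam)
                     \<and> mat_norm1 (matrix_inv (GammaM y \<alpha> lam)) \<le> M) (at 0)"
proof -
  define Q where "Q = inv_on_S (Sm ** Dtilde y \<alpha> ** Sm)"
  obtain C where "eventually (\<lambda>lam. invertible (GammaM y \<alpha> lam) \<and>
      mat_norm1 (matrix_inv (GammaM y \<alpha> lam) - Q) \<le> C / cmod (gfun lam)) (at 0)"
    using GammaM_inverse_expansion[OF y ns] unfolding Q_def by blast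
  moreover have "eventually (\<lambda>lam. 1 < cmod (gfun lam)) (at 0)"
    by (rule eventually_compose_filterlim[OF eventually_gt_at_top gfun_tendsto_infinity])
  ultimately have "eventually (\<lambda>lam. invertible (GammaM y \<alpha> lam)
                     \<and> mat_norm1 (matrix_inv (GammaM y \<alpha> lam)) \<le> \<bar>C\<bar> + mat_norm1 Q) (at 0)"
  proof eventually_elim
    case (elim lam)
    have "C \<le> \<bar>C\<bar> * cmod (gfun lam)"
      using elim(2) mult_left_mono[of 1 "cmod (gfun lam)" "\<bar>C\<bar>"] by linarith
    then have "C / cmod (gfun lam) \<le> \<bar>C\<bar>"
      using elim(2) by (simp add: divide_le_eq)
    then show ?case
      using elim(1) mat_norm1_add[of "matrix_inv (GammaM y \<alpha> lam) - Q" Q] by simp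
  qed
  then show thesis ..
qed

lemma GammaM_inverse_unbounded:
  fixes y :: "'n::finite \<Rightarrow> real^2"
  assumes y: "inj y" and ns: "\<not> nonsing_on_S (Sm ** Dtilde y \<alpha> ** Sm)"
  shows "eventually (\<lambda>lam. invertible (GammaM y \<alpha> lam)
                       \<longrightarrow> M < mat_norm1 (matrix_inv (GammaM y \<alpha> lam))) (at 0)"
proof -
  obtain \<delta> where \<delta>: "0 < \<delta>" and unbounded: "\<And>c E h. c \<noteq> 0 \<Longrightarrow> cmod (1/c) \<le> h \<Longrightarrow>
      mat_norm1 E \<le> h \<Longrightarrow> h < \<delta> \<Longrightarrow> invertible (Dtilde y \<alpha> + E - mat_scale c Pm) \<Longrightarrow>
      M < mat_norm1 (matrix_inv (Dtilde y \<alpha> + E - mat_scale c Pm))"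
    using perturbed_inverse_unbounded[OF ns, where M = M] by metis
  show ?thesis
    using GammaM_perturbation[OF y \<delta>, of \<alpha>]
  proof eventually_elim
    case (elim lam)
    then have eq: "GammaM y \<alpha> lam = Dtilde y \<alpha> + Gamma_remainder y lam
                     - mat_scale (of_nat CARD('n) * gfun lam) Pm"
      by blast
    from elim show ?case
      unfolding eq by (intro impI unbounded[where h = "1 / cmod (gfun lam)"]) (use elim in blast)+
  qed
qed

lemma eventually_at_0_imp_cuhp0:
  "eventually P (at 0) \<Longrightarrow> \<exists>\<delta>>0. \<forall>lam\<in>cuhp0. cmod lam < \<delta> \<longrightarrow> P lam"
  unfolding eventually_at cuhp0_def by auto

lemma eventually_at_0_obtain_cuhp0:
  assumes "eventually P (at 0)" and "0 < \<delta>"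
  obtains lam where "lam \<in> cuhp0" and "cmod lam < \<delta>" and "P lam"
proof -
  obtain d where d: "0 < d" and P: "\<And>lam. lam \<noteq> 0 \<Longrightarrow> cmod lam < d \<Longrightarrow> P lam"
    using assms(1) unfolding eventually_at by auto
  define lam where "lam = complex_of_real (min \<delta> d / 2)"
  have "lam \<in> cuhp0" and "cmod lam < \<delta>" and "cmod lam < d"
    using d assms(2) by (auto simp: lam_def cuhp0_def)
  with P show thesis
    using that by (auto simp: cuhp0_def)
qed

lemma GammaM_inverse_bounded_imp_nonsing:
  fixes y :: "'n::finite \<Rightarrow> real^2" and \<alpha> :: "'n \<Rightarrow> real"
  assumes y: "inj y"
    and "\<exists>C \<delta>. \<delta> > 0 \<and> (\<forall>lam\<in>cuhp0. cmod lam < \<delta> \<longrightarrow>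
           invertible (GammaM y \<alpha> lam) \<and> norm (matrix_inv (GammaM y \<alpha> lam)) \<le> C)"
  shows "nonsing_on_S (Sm ** Dtilde y \<alpha> ** Sm)"
proof (rule ccontr)
  obtain C \<delta> where \<delta>: "0 < \<delta>" and bounded: "\<And>lam. lam \<in> cuhp0 \<Longrightarrow> cmod lam < \<delta> \<Longrightarrow>
      invertible (GammaM y \<alpha> lam) \<and> norm (matrix_inv (GammaM y \<alpha> lam)) \<le> C"
    using assms(2) by blast
  assume "\<not> nonsing_on_S (Sm ** Dtilde y \<alpha> ** Sm)"
  from eventually_at_0_obtain_cuhp0[OF GammaM_inverse_unbounded[OF y this] \<delta>]
  obtain lam where "lam \<in> cuhp0" "cmod lam < \<delta>" and unbounded: "invertible (GammaM y \<alpha> lam)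
      \<longrightarrow> real CARD('n) * real CARD('n) * C < mat_norm1 (matrix_inv (GammaM y \<alpha> lam))" .
  then have "invertible (GammaM y \<alpha> lam)" and "norm (matrix_inv (GammaM y \<alpha> lam)) \<le> C"
    using bounded by auto
  moreover from this(2) have "real CARD('n) * real CARD('n) * norm (matrix_inv (GammaM y \<alpha> lam))
                                \<le> real CARD('n) * real CARD('n) * C"
    by (intro mult_left_mono) auto
  ultimately show False
    using unbounded mat_norm1_le_norm[of "matrix_inv (GammaM y \<alpha> lam)"] by linarith
qed

theorem mainTheorem8:
  fixes y :: "'n::finite \<Rightarrow> real^2" and \<alpha> :: "'n \<Rightarrow> real"
  assumes "inj y"
  shows "((\<exists>C \<delta>. \<delta> > 0 \<and> (\<forall>lam\<in>cuhp0. cmod lam < \<delta> \<longrightarrow>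
              invertible (GammaM y \<alpha> lam) \<and> norm (matrix_inv (GammaM y \<alpha> lam)) \<le> C))
          \<longleftrightarrow> nonsing_on_S (Sm ** Dtilde y \<alpha> ** Sm))
       \<and> (nonsing_on_S (Sm ** Dtilde y \<alpha> ** Sm) \<longrightarrow>
            (\<exists>C \<delta>. \<delta> > 0 \<and> (\<forall>lam\<in>cuhp0. cmod lam < \<delta> \<longrightarrow>
                norm (matrix_inv (GammaM y \<alpha> lam) - inv_on_S (Sm ** Dtilde y \<alpha> ** Sm))
                  \<le> C / cmod (gfun lam)))
          \<and> (\<exists>lam0 > 0. \<exists>C :: nat \<Rightarrow> real. \<forall>l j k. \<forall>t. 0 < t \<and> t < lam0 \<longrightarrow>
                ((rderiv ^^ l) (\<lambda>s. matrix_inv (GammaM y \<alpha> (complex_of_real s)) $ j $ k)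
                   has_vector_derivative
                 (rderiv ^^ Suc l) (\<lambda>s. matrix_inv (GammaM y \<alpha> (complex_of_real s)) $ j $ k) t) (at t)
                \<and> cmod ((rderiv ^^ l) (\<lambda>s. matrix_inv (GammaM y \<alpha> (complex_of_real s)) $ j $ k) t)
                    \<le> C l * t powi (- int l)))"
proof (intro conjI impI iffI, goal_cases)
  case 1
  then show ?case
    by (rule GammaM_inverse_bounded_imp_nonsing[OF assms])
next
  case 2
  obtain M where "eventually (\<lambda>lam. invertible (GammaM y \<alpha> lam)
                    \<and> mat_norm1 (matrix_inv (GammaM y \<alpha> lam)) \<le> M) (at 0)"
    by (rule GammaM_inverse_bounded[OF assms 2])
  then show ?case
    by (auto dest!: eventually_at_0_imp_cuhp0 intro: order_trans[OF norm_le_mat_norm1])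
next
  case 3
  obtain C where "eventually (\<lambda>lam. invertible (GammaM y \<alpha> lam) \<and>
      mat_norm1 (matrix_inv (GammaM y \<alpha> lam) - inv_on_S (Sm ** Dtilde y \<alpha> ** Sm))
        \<le> C / cmod (gfun lam)) (at 0)"
    by (rule GammaM_inverse_expansion[OF assms 3])
  then show ?case
    by (auto dest!: eventually_at_0_imp_cuhp0 intro: order_trans[OF norm_le_mat_norm1])
next
  case 4
  obtain M where "eventually (\<lambda>lam. invertible (GammaM y \<alpha> lam)
                    \<and> mat_norm1 (matrix_inv (GammaM y \<alpha> lam)) \<le> M) (at 0)"
    by (rule GammaM_inverse_bounded[OF assms 4])
  then show ?case
    by (rule GammaM_inverse_derivative_bounds[OF assms])
qed

end
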